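(* Let $\mathcal H(t)=\sum_{n\ge1}h_nt^n$, where $h_n$ is the number of bicoloured noncrossing configurations of size $n$. Then $$-t-t^2+(1-4t)\mathcal H(t)-3\mathcal H(t)^2=0.$$
   Context: For $n\ge2$, a bicoloured noncrossing configuration (BNC) of size $n$ is a regular polygon with vertices $1,\dots,n+1$ numbered clockwise, together with two disjoint sets of arcs, blue and red. The arcs are the pairs $(i,j)$, $1\le i<j\le n+1$: the edges are $(i,i+1)$, the base is $(1,n+1)$, and the others are diagonals. Coloured (blue or red) arcs must be pairwise noncrossing, where $(i,j)$ and $(k,l)$ cross iff $i<k<j<l$ or $k<i<l<j$. Every red arc must be a diagonal. Arcs in neither set are uncoloured. By convention there is exactly one BNC of size $1$. *)

theory Defs
  imports "HOL-Computational_Algebra.Formal_Power_Series"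
begin

text \<open>Arcs of the polygon with vertices 1..n+1: pairs (i,j) with 1 <= i < j <= n+1.\<close>
definition arcs :: "nat \<Rightarrow> (nat \<times> nat) set" where
  "arcs n = {(i, j). 1 \<le> i \<and> i < j \<and> j \<le> n + 1}"

text \<open>Diagonals: arcs that are neither edges (i,i+1) nor the base (1,n+1).\<close>
definition diagonals :: "nat \<Rightarrow> (nat \<times> nat) set" where
  "diagonals n = {(i, j) \<in> arcs n. j \<noteq> i + 1 \<and> (i, j) \<noteq> (1, n + 1)}"

definition crosses :: "nat \<times> nat \<Rightarrow> nat \<times> nat \<Rightarrow> bool" where
  "crosses a b = (case a of (i, j) \<Rightarrow> case b of (k, l) \<Rightarrow>
      (i < k \<and> k < j \<and> j < l) \<or> (k < i \<and> i < l \<and> l < j))"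

definition noncrossing :: "(nat \<times> nat) set \<Rightarrow> bool" where
  "noncrossing S = (\<forall>a\<in>S. \<forall>b\<in>S. \<not> crosses a b)"

definition BNC :: "nat \<Rightarrow> ((nat \<times> nat) set \<times> (nat \<times> nat) set) set" where
  "BNC n = {(B, R). B \<subseteq> arcs n \<and> R \<subseteq> diagonals n \<and> B \<inter> R = {}
                    \<and> noncrossing (B \<union> R)}"

text \<open>h n: number of BNCs of size n; by convention h 1 = 1 (h 0 is unused).\<close>
definition h :: "nat \<Rightarrow> nat" where
  "h n = (if n = 0 then 0 else if n = 1 then 1 else card (BNC n))"

definition H :: "int fps" where
  "H = Abs_fps (\<lambda>n. if n = 0 then 0 else int (h n))"

end

theory Submission
  imports Defs
begin

text \<open>
  Call a configuration of the polygon with vertices \<open>a, \<dots>, b\<close> open if its base \<open>(a, b)\<close>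
  is uncoloured, and let \<open>f\<^sub>n\<close> count the open configurations of the polygon \<open>0, \<dots>, n\<close>.
  In an open configuration let \<open>k\<close> be the largest vertex \<open>a < k < b\<close> joined to \<open>a\<close> by a
  coloured arc (\<open>k = a + 1\<close> if there is none). No coloured arc crosses \<open>(a, k)\<close>, so the
  configuration is the union of one on \<open>a, \<dots>, k\<close>, in which \<open>(a, k)\<close> takes one of two states,
  and one on \<open>k, \<dots>, b\<close>, whose side \<open>(k, b)\<close> is unconstrained: three states, or two if it is
  an edge, which cannot be red. This gives
  \<open>f\<^sub>n = \<Sum>\<^sub>k 2 f\<^sub>k \<cdot> c\<^sub>n\<^sub>-\<^sub>k f\<^sub>n\<^sub>-\<^sub>k\<close> with \<open>c\<^sub>1 = 2\<close> and \<open>c\<^sub>d = 3\<close> otherwise, i.e.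
  \<open>F = X + 6 F\<^sup>2 - 2 X F\<close> for the generating function \<open>F\<close> of \<open>f\<close>. The base of a
  configuration is either uncoloured or blue, so \<open>h\<^sub>n = 2 f\<^sub>n\<close> for \<open>n \<ge> 2\<close>, hence
  \<open>H = 2 F - X\<close>, and the identity for \<open>H\<close> follows.
\<close>

type_synonym colouring = "(nat \<times> nat) set \<times> (nat \<times> nat) set"

definition arcs_in :: "nat \<Rightarrow> nat \<Rightarrow> (nat \<times> nat) set" where
  "arcs_in a b = {(i, j). a \<le> i \<and> i < j \<and> j \<le> b}"

definition inner_arcs :: "nat \<Rightarrow> nat \<Rightarrow> (nat \<times> nat) set" where
  "inner_arcs a b = arcs_in a b - {(a, b)}"

definition nonedges :: "(nat \<times> nat) set" where
  "nonedges = {(i, j). j \<noteq> i + 1}"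

definition colourings :: "(nat \<times> nat) set \<Rightarrow> (nat \<times> nat) set \<Rightarrow> colouring set" where
  "colourings A D = {(B, R). B \<subseteq> A \<and> R \<subseteq> D \<and> B \<inter> R = {} \<and> noncrossing (B \<union> R)}"

definition open_configs :: "nat \<Rightarrow> nat \<Rightarrow> colouring set" where
  "open_configs a b = colourings (inner_arcs a b) (inner_arcs a b \<inter> nonedges)"

lemma finite_arcs_in: "finite (arcs_in a b)"
  by (rule finite_subset[of _ "{a..b} \<times> {a..b}"]) (auto simp: arcs_in_def)

lemma finite_inner_arcs: "finite (inner_arcs a b)"
  using finite_arcs_in by (simp add: inner_arcs_def)

lemma finite_colourings: "finite A \<Longrightarrow> D \<subseteq> A \<Longrightarrow> finite (colourings A D)"
  by (rule finite_subset[of _ "Pow A \<times> Pow D"]) (auto simp: colourings_def intro: finite_subset)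

lemma finite_open_configs: "finite (open_configs a b)"
  by (simp add: open_configs_def finite_colourings finite_inner_arcs)

lemma crosses_irrefl: "\<not> crosses e e"
  by (cases e) (auto simp: crosses_def)

lemma noncrossing_insert:
  "noncrossing (insert e S) \<longleftrightarrow> noncrossing S \<and> (\<forall>x\<in>S. \<not> crosses e x \<and> \<not> crosses x e)"
  using crosses_irrefl by (auto simp: noncrossing_def)

lemma noncrossing_subset: "noncrossing S \<Longrightarrow> T \<subseteq> S \<Longrightarrow> noncrossing T"
  by (auto simp: noncrossing_def)

lemma not_crosses_arcs_in_adjacent:
  "p \<in> arcs_in a k \<Longrightarrow> q \<in> arcs_in k b \<Longrightarrow> \<not> crosses p q \<and> \<not> crosses q p"
  by (cases p; cases q) (auto simp: arcs_in_def crosses_def)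

lemma noncrossing_Un_adjacent:
  assumes "noncrossing S" "noncrossing T" "S \<subseteq> arcs_in a k" "T \<subseteq> arcs_in k b"
  shows "noncrossing (S \<union> T)"
  using assms not_crosses_arcs_in_adjacent unfolding noncrossing_def by blast

lemma not_crosses_inner_arcs: "x \<in> inner_arcs a b \<Longrightarrow> \<not> crosses (a, b) x \<and> \<not> crosses x (a, b)"
  by (auto simp: inner_arcs_def arcs_in_def crosses_def)

lemma arcs_in_eq_insert: "a < b \<Longrightarrow> arcs_in a b = insert (a, b) (inner_arcs a b)"
  by (auto simp: arcs_in_def inner_arcs_def)

lemma arcs_in_nonedges:
  "a < b \<Longrightarrow> arcs_in a b \<inter> nonedges =
     (if b = Suc a then inner_arcs a b \<inter> nonedges else insert (a, b) (inner_arcs a b \<inter> nonedges))"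
  by (auto simp: arcs_in_def inner_arcs_def nonedges_def)

lemma open_configs_edge: "open_configs a (Suc a) = {({}, {})}"
proof -
  have "inner_arcs a (Suc a) = {}" by (auto simp: inner_arcs_def arcs_in_def)
  then show ?thesis by (auto simp: open_configs_def colourings_def noncrossing_def)
qed

locale free_arc =
  fixes e :: "nat \<times> nat" and A D :: "(nat \<times> nat) set"
  assumes finite_A: "finite A" and D_subset: "D \<subseteq> A" and e_notin: "e \<notin> A"
    and free: "\<forall>x\<in>A. \<not> crosses e x \<and> \<not> crosses x e"
begin

definition with_blue :: "colouring set" where
  "with_blue = (\<lambda>(B, R). (insert e B, R)) ` colourings A D"

definition with_red :: "colouring set" where
  "with_red = (\<lambda>(B, R). (B, insert e R)) ` colourings A D"

lemma finite_colourings_A: "finite (colourings A D)"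
  using finite_colourings finite_A D_subset by blast

lemma card_with_blue: "card with_blue = card (colourings A D)"
  unfolding with_blue_def
  by (rule card_image, rule inj_onI) (use e_notin in \<open>auto simp: colourings_def insert_ident\<close>)

lemma card_with_red: "card with_red = card (colourings A D)"
  unfolding with_red_def
  by (rule card_image, rule inj_onI) (use e_notin D_subset in \<open>auto simp: colourings_def insert_ident\<close>)

lemma noncrossing_insert_free: "S \<subseteq> A \<Longrightarrow> noncrossing S \<Longrightarrow> noncrossing (insert e S)"
  using free by (auto simp: noncrossing_insert)

lemma colourings_insert:
  "colourings (insert e A) (insert e D) = colourings A D \<union> with_blue \<union> with_red"
proof
  show "colourings (insert e A) (insert e D) \<subseteq> colourings A D \<union> with_blue \<union> with_red"
  proof (clarify)
    fix B R assume BR: "(B, R) \<in> colourings (insert e A) (insert e D)"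
      and "(B, R) \<notin> with_red" "(B, R) \<notin> with_blue"
    have "e \<in> B \<Longrightarrow> (B, R) \<in> with_blue"
      unfolding with_blue_def using BR
      by (intro image_eqI[of _ _ "(B - {e}, R)"])
        (auto simp: colourings_def intro: noncrossing_subset)
    moreover have "e \<in> R \<Longrightarrow> (B, R) \<in> with_red"
      unfolding with_red_def using BR
      by (intro image_eqI[of _ _ "(B, R - {e})"])
        (auto simp: colourings_def intro: noncrossing_subset)
    ultimately show "(B, R) \<in> colourings A D"
      using BR \<open>(B, R) \<notin> with_red\<close> \<open>(B, R) \<notin> with_blue\<close> by (auto simp: colourings_def)
  qed
  show "colourings A D \<union> with_blue \<union> with_red \<subseteq> colourings (insert e A) (insert e D)"
    using e_notin D_subset noncrossing_insert_free
    by (auto simp: colourings_def with_blue_def with_red_def)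
qed

lemma colourings_insert_uncoloured_or_blue:
  "colourings (insert e A) D = colourings A D \<union> with_blue"
proof -
  have "colourings (insert e A) D \<subseteq> colourings (insert e A) (insert e D)"
    by (auto simp: colourings_def)
  moreover have "colourings (insert e A) D \<inter> with_red = {}"
    using e_notin D_subset by (auto simp: colourings_def with_red_def)
  moreover have "colourings A D \<union> with_blue \<subseteq> colourings (insert e A) D"
    using e_notin D_subset noncrossing_insert_free by (auto simp: colourings_def with_blue_def)
  ultimately show ?thesis unfolding colourings_insert by blast
qed

lemma coloured_colourings_insert:
  "{x \<in> colourings (insert e A) (insert e D). e \<in> fst x \<union> snd x} = with_blue \<union> with_red"
  unfolding colourings_insert using e_notin D_subset
  by (auto simp: colourings_def with_blue_def with_red_def)

lemma disjoint_with_blue: "colourings A D \<inter> with_blue = {}"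
  using e_notin by (auto simp: colourings_def with_blue_def)

lemma disjoint_with_red: "(colourings A D \<union> with_blue) \<inter> with_red = {}"
  using e_notin D_subset by (auto simp: colourings_def with_blue_def with_red_def)

lemma finite_with_blue: "finite with_blue"
  using finite_colourings_A by (simp add: with_blue_def)

lemma finite_with_red: "finite with_red"
  using finite_colourings_A by (simp add: with_red_def)

lemma card_colourings_insert: "card (colourings (insert e A) (insert e D)) = 3 * card (colourings A D)"
  unfolding colourings_insert
  using card_Un_disjoint[OF _ finite_with_red disjoint_with_red]
    card_Un_disjoint[OF finite_colourings_A finite_with_blue disjoint_with_blue]
    card_with_blue card_with_red finite_colourings_A finite_with_blue
  by simp

lemma card_colourings_insert_uncoloured_or_blue:
  "card (colourings (insert e A) D) = 2 * card (colourings A D)"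
  unfolding colourings_insert_uncoloured_or_blue
  using card_Un_disjoint[OF finite_colourings_A finite_with_blue disjoint_with_blue] card_with_blue
  by simp

lemma card_coloured_colourings_insert:
  "card {x \<in> colourings (insert e A) (insert e D). e \<in> fst x \<union> snd x} = 2 * card (colourings A D)"
proof -
  have "with_blue \<inter> with_red = {}" using disjoint_with_red by blast
  then show ?thesis
    unfolding coloured_colourings_insert
    using card_Un_disjoint[OF finite_with_blue finite_with_red] card_with_blue card_with_red
    by simp
qed

end

lemma free_arc_base: "free_arc (a, b) (inner_arcs a b) (inner_arcs a b \<inter> nonedges)"
  by unfold_locales (auto simp: finite_inner_arcs inner_arcs_def finite_arcs_in not_crosses_inner_arcs)

definition side_choices :: "nat \<Rightarrow> nat" where
  "side_choices d = (if d = 1 then 2 else 3)"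

definition left_configs :: "nat \<Rightarrow> nat \<Rightarrow> colouring set" where
  "left_configs a k = {x \<in> colourings (arcs_in a k) (arcs_in a k \<inter> nonedges).
     k = Suc a \<or> (a, k) \<in> fst x \<union> snd x}"

lemma card_left_configs:
  assumes "a < k" shows "card (left_configs a k) = 2 * card (open_configs a k)"
proof (cases "k = Suc a")
  case True
  then have "left_configs a k = colourings (insert (a, k) (inner_arcs a k)) (inner_arcs a k \<inter> nonedges)"
    unfolding left_configs_def arcs_in_nonedges[OF assms]
    unfolding arcs_in_eq_insert[OF assms] by simp
  then show ?thesis
    using free_arc.card_colourings_insert_uncoloured_or_blue[OF free_arc_base]
    by (simp add: open_configs_def)
next
  case False
  then have "left_configs a k = {x \<in> colourings (insert (a, k) (inner_arcs a k))
      (insert (a, k) (inner_arcs a k \<inter> nonedges)). (a, k) \<in> fst x \<union> snd x}"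
    unfolding left_configs_def arcs_in_nonedges[OF assms]
    unfolding arcs_in_eq_insert[OF assms] by simp
  then show ?thesis
    using free_arc.card_coloured_colourings_insert[OF free_arc_base]
    by (simp add: open_configs_def)
qed

lemma card_colourings_arcs_in:
  assumes "k < b"
  shows "card (colourings (arcs_in k b) (arcs_in k b \<inter> nonedges)) = side_choices (b - k) * card (open_configs k b)"
  using free_arc.card_colourings_insert_uncoloured_or_blue[OF free_arc_base]
    free_arc.card_colourings_insert[OF free_arc_base]
  unfolding arcs_in_nonedges[OF assms]
    unfolding arcs_in_eq_insert[OF assms]
  by (auto simp: side_choices_def open_configs_def)

definition configs_split_at :: "nat \<Rightarrow> nat \<Rightarrow> nat \<Rightarrow> colouring set" where
  "configs_split_at a b k = {x \<in> open_configs a b. (k = Suc a \<or> (a, k) \<in> fst x \<union> snd x)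
      \<and> (\<forall>j. k < j \<and> j < b \<longrightarrow> (a, j) \<notin> fst x \<union> snd x)}"

definition join :: "colouring \<times> colouring \<Rightarrow> colouring" where
  "join = (\<lambda>((B1, R1), (B2, R2)). (B1 \<union> B2, R1 \<union> R2))"

lemma configs_split_at_arcs:
  assumes x: "x \<in> configs_split_at a b k" and k: "a < k" "k < b" and ij: "(i, j) \<in> fst x \<union> snd x"
  shows "(i, j) \<in> arcs_in a k \<union> arcs_in k b"
proof (rule ccontr)
  assume "(i, j) \<notin> arcs_in a k \<union> arcs_in k b"
  moreover have "a \<le> i" "i < j" "j \<le> b" "(i, j) \<noteq> (a, b)"
    using ij x by (auto simp: configs_split_at_def open_configs_def colourings_def inner_arcs_def arcs_in_def)
  ultimately have ikj: "a \<le> i" "i < k" "k < j" "j \<le> b" "(i, j) \<noteq> (a, b)"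
    by (auto simp: arcs_in_def)
  show False
  proof (cases "i = a")
    case True
    then show False using x ikj ij by (auto simp: configs_split_at_def)
  next
    case False
    then have "(a, k) \<in> fst x \<union> snd x" using x ikj by (auto simp: configs_split_at_def)
    moreover have "crosses (a, k) (i, j)" using False ikj by (auto simp: crosses_def)
    moreover have "noncrossing (fst x \<union> snd x)"
      using x by (auto simp: configs_split_at_def open_configs_def colourings_def)
    ultimately show False using ij by (auto simp: noncrossing_def)
  qed
qed

lemma configs_split_at_subset_join_image:
  assumes k: "a < k" "k < b"
  shows "configs_split_at a b k
    \<subseteq> join ` (left_configs a k \<times> colourings (arcs_in k b) (arcs_in k b \<inter> nonedges))"
proof (clarify)
  fix B R assume x: "(B, R) \<in> configs_split_at a b k"
  have BR: "B \<subseteq> inner_arcs a b" "R \<subseteq> nonedges" "B \<inter> R = {}" "noncrossing (B \<union> R)"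
    using x by (auto simp: configs_split_at_def open_configs_def colourings_def)
  have "k = Suc a \<or> (a, k) \<in> B \<union> R" using x by (auto simp: configs_split_at_def)
  moreover have "(a, k) \<in> arcs_in a k" using k by (auto simp: arcs_in_def)
  ultimately have "(B \<inter> arcs_in a k, R \<inter> arcs_in a k) \<in> left_configs a k"
    using BR by (auto simp: left_configs_def colourings_def intro: noncrossing_subset)
  moreover have "(B \<inter> arcs_in k b, R \<inter> arcs_in k b) \<in> colourings (arcs_in k b) (arcs_in k b \<inter> nonedges)"
    using BR by (auto simp: colourings_def intro: noncrossing_subset)
  moreover have "(B, R) = join ((B \<inter> arcs_in a k, R \<inter> arcs_in a k), (B \<inter> arcs_in k b, R \<inter> arcs_in k b))"
    using configs_split_at_arcs[OF x k] by (auto simp: join_def)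
  ultimately show "(B, R) \<in> join ` (left_configs a k \<times> colourings (arcs_in k b) (arcs_in k b \<inter> nonedges))"
    by blast
qed

lemma join_mem_configs_split_at:
  assumes k: "a < k" "k < b"
    and L: "(B1, R1) \<in> left_configs a k"
    and R: "(B2, R2) \<in> colourings (arcs_in k b) (arcs_in k b \<inter> nonedges)"
  shows "join ((B1, R1), (B2, R2)) \<in> configs_split_at a b k"
proof -
  have L': "B1 \<union> R1 \<subseteq> arcs_in a k" "R1 \<subseteq> nonedges" "B1 \<inter> R1 = {}" "noncrossing (B1 \<union> R1)"
    "k = Suc a \<or> (a, k) \<in> B1 \<union> R1"
    using L by (auto simp: left_configs_def colourings_def)
  have R': "B2 \<union> R2 \<subseteq> arcs_in k b" "R2 \<subseteq> nonedges" "B2 \<inter> R2 = {}" "noncrossing (B2 \<union> R2)"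
    using R by (auto simp: colourings_def)
  have "noncrossing ((B1 \<union> R1) \<union> (B2 \<union> R2))"
    using noncrossing_Un_adjacent L'(1,4) R'(1,4) by blast
  then have "noncrossing ((B1 \<union> B2) \<union> (R1 \<union> R2))" by (simp add: Un_ac)
  moreover have "arcs_in a k \<subseteq> inner_arcs a b" "arcs_in k b \<subseteq> inner_arcs a b"
    using k by (auto simp: arcs_in_def inner_arcs_def)
  moreover have "arcs_in a k \<inter> arcs_in k b = {}" by (auto simp: arcs_in_def)
  moreover have "\<forall>j. k < j \<and> j < b \<longrightarrow> (a, j) \<notin> B1 \<union> B2 \<union> (R1 \<union> R2)"
    using L'(1) R'(1) k by (auto simp: arcs_in_def)
  ultimately show ?thesis
    using L' R' by (auto simp: configs_split_at_def open_configs_def colourings_def join_def)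
qed

lemma inj_on_join:
  "inj_on join (left_configs a k \<times> colourings (arcs_in k b) (arcs_in k b \<inter> nonedges))"
proof (rule inj_on_inverseI)
  fix p assume p: "p \<in> left_configs a k \<times> colourings (arcs_in k b) (arcs_in k b \<inter> nonedges)"
  have "arcs_in a k \<inter> arcs_in k b = {}" by (auto simp: arcs_in_def)
  with p show "(\<lambda>(B, R). ((B \<inter> arcs_in a k, R \<inter> arcs_in a k), (B \<inter> arcs_in k b, R \<inter> arcs_in k b))) (join p) = p"
    by (auto simp: left_configs_def colourings_def join_def)
qed

lemma card_configs_split_at:
  assumes "a < k" "k < b"
  shows "card (configs_split_at a b k) = 2 * card (open_configs a k) * (side_choices (b - k) * card (open_configs k b))"
proof -
  have "configs_split_at a b k
      = join ` (left_configs a k \<times> colourings (arcs_in k b) (arcs_in k b \<inter> nonedges))"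
    using configs_split_at_subset_join_image[OF assms] join_mem_configs_split_at[OF assms] by auto
  then have "card (configs_split_at a b k)
      = card (left_configs a k) * card (colourings (arcs_in k b) (arcs_in k b \<inter> nonedges))"
    by (simp add: card_image[OF inj_on_join] card_cartesian_product)
  then show ?thesis
    using card_left_configs[OF assms(1)] card_colourings_arcs_in[OF assms(2)] by simp
qed

lemma open_configs_eq_UN_split_at:
  assumes "Suc a < b" shows "open_configs a b = (\<Union>k\<in>{Suc a..<b}. configs_split_at a b k)"
proof
  show "open_configs a b \<subseteq> (\<Union>k\<in>{Suc a..<b}. configs_split_at a b k)"
  proof
    fix x assume x: "x \<in> open_configs a b"
    define K where "K = {k. Suc a \<le> k \<and> k < b \<and> (k = Suc a \<or> (a, k) \<in> fst x \<union> snd x)}"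
    have "finite K" "Suc a \<in> K" using assms by (auto simp: K_def)
    define k where "k = Max K"
    have "k \<in> K" unfolding k_def using \<open>finite K\<close> \<open>Suc a \<in> K\<close> by (metis Max_in empty_iff)
    have k_max: "j \<le> k" if "j \<in> K" for j
      unfolding k_def using \<open>finite K\<close> that by simp
    have "(a, j) \<notin> fst x \<union> snd x" if "k < j" "j < b" for j
    proof
      assume "(a, j) \<in> fst x \<union> snd x"
      with that \<open>k \<in> K\<close> have "j \<in> K" by (simp add: K_def)
      with k_max that show False by fastforce
    qed
    with x \<open>k \<in> K\<close> have "x \<in> configs_split_at a b k"
      by (simp add: configs_split_at_def K_def)
    with \<open>k \<in> K\<close> show "x \<in> (\<Union>k\<in>{Suc a..<b}. configs_split_at a b k)"
      by (auto simp: K_def)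
  qed
qed (auto simp: configs_split_at_def)

lemma disjoint_configs_split_at:
  "a < k \<Longrightarrow> k < k' \<Longrightarrow> k' < b \<Longrightarrow> configs_split_at a b k \<inter> configs_split_at a b k' = {}"
  by (auto simp: configs_split_at_def)

lemma card_open_configs_rec:
  assumes "Suc a < b"
  shows "card (open_configs a b)
    = (\<Sum>k\<in>{Suc a..<b}. 2 * card (open_configs a k) * (side_choices (b - k) * card (open_configs k b)))"
proof -
  have "card (open_configs a b) = (\<Sum>k\<in>{Suc a..<b}. card (configs_split_at a b k))"
    unfolding open_configs_eq_UN_split_at[OF assms]
  proof (rule card_UN_disjoint)
    show "\<forall>k\<in>{Suc a..<b}. finite (configs_split_at a b k)"
      by (auto simp: configs_split_at_def intro: finite_subset[OF _ finite_open_configs])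
    show "\<forall>k\<in>{Suc a..<b}. \<forall>k'\<in>{Suc a..<b}. k \<noteq> k'
        \<longrightarrow> configs_split_at a b k \<inter> configs_split_at a b k' = {}"
      using disjoint_configs_split_at
      by (metis Int_commute Suc_le_eq atLeastLessThan_iff linorder_neqE_nat)
  qed simp
  then show ?thesis by (simp add: card_configs_split_at)
qed

function open_count :: "nat \<Rightarrow> nat" where
  "open_count n = (if n \<le> 1 then n
     else (\<Sum>k\<in>{1..<n}. 2 * open_count k * (side_choices (n - k) * open_count (n - k))))"
  by pat_completeness auto
termination by (relation "measure id") auto

declare open_count.simps[simp del]

lemma open_count_0: "open_count 0 = 0"
  by (simp add: open_count.simps)

lemma open_count_1: "open_count (Suc 0) = 1"
  by (simp add: open_count.simps)

lemma open_count_rec: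
  "2 \<le> n \<Longrightarrow> open_count n = (\<Sum>k\<in>{1..<n}. 2 * open_count k * (side_choices (n - k) * open_count (n - k)))"
  by (simp add: open_count.simps)

lemma card_open_configs: "a < b \<Longrightarrow> card (open_configs a b) = open_count (b - a)"
proof (induction "b - a" arbitrary: a b rule: less_induct)
  case less
  show ?case
  proof (cases "b = Suc a")
    case True
    then show ?thesis by (simp add: open_configs_edge open_count_1)
  next
    case False
    with less.prems have "Suc a < b" by simp
    have "card (open_configs a b)
        = (\<Sum>k\<in>{Suc a..<b}. 2 * open_count (k - a) * (side_choices (b - k) * open_count (b - k)))"
      unfolding card_open_configs_rec[OF \<open>Suc a < b\<close>] using less by (intro sum.cong) auto
    also have "\<dots> = (\<Sum>i\<in>{1..<b - a}. 2 * open_count i * (side_choices (b - a - i) * open_count (b - a - i)))"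
      by (rule sum.reindex_bij_witness[of _ "\<lambda>i. i + a" "\<lambda>k. k - a"]) auto
    also have "\<dots> = open_count (b - a)"
      using \<open>Suc a < b\<close> by (simp add: open_count_rec)
    finally show ?thesis .
  qed
qed

lemma BNC_eq_colourings:
  "2 \<le> n \<Longrightarrow> BNC n = colourings (insert (1, n + 1) (inner_arcs 1 (n + 1))) (inner_arcs 1 (n + 1) \<inter> nonedges)"
  by (auto simp: BNC_def colourings_def arcs_def diagonals_def inner_arcs_def arcs_in_def nonedges_def)

lemma h_eq_open_count: "2 \<le> n \<Longrightarrow> h n = 2 * open_count n"
  using BNC_eq_colourings free_arc.card_colourings_insert_uncoloured_or_blue[OF free_arc_base]
    card_open_configs[of 1 "n + 1"]
  by (simp add: h_def open_configs_def)

unbundle fps_syntax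

definition open_count_fps :: "int fps" where
  "open_count_fps = Abs_fps (\<lambda>n. int (open_count n))"

lemma H_eq_open_count_fps: "H = 2 * open_count_fps - fps_X"
proof (rule fps_ext)
  fix n :: nat
  consider "n = 0" | "n = 1" | "2 \<le> n" by linarith
  then show "H $ n = (2 * open_count_fps - fps_X) $ n"
  proof cases
    case 3
    then show ?thesis
      by (simp add: H_def open_count_fps_def h_eq_open_count numeral_fps_const)
  qed (simp_all add: H_def open_count_fps_def h_def open_count_0 open_count_1 numeral_fps_const fps_X_def)
qed

text \<open>Replacing the factor \<open>side_choices\<close> by \<open>3\<close> overcounts only the term \<open>k = n - 1\<close>,
  by \<open>2 f\<^sub>n\<^sub>-\<^sub>1 f\<^sub>1\<close>; the terms \<open>k = 0, n\<close> of the full convolution vanish as \<open>f\<^sub>0 = 0\<close>.\<close>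
lemma open_count_convolution:
  assumes "2 \<le> n"
  shows "int (open_count n)
    = 6 * (\<Sum>i=0..n. int (open_count i) * int (open_count (n - i))) - 2 * int (open_count (n - 1))"
proof -
  have "int (open_count n) = (\<Sum>k\<in>{1..<n}. 6 * (int (open_count k) * int (open_count (n - k)))
      - (if k = n - 1 then 2 * int (open_count k) else 0))"
    unfolding open_count_rec[OF assms] of_nat_sum
    by (intro sum.cong) (auto simp: side_choices_def open_count_1)
  also have "\<dots> = 6 * (\<Sum>k\<in>{1..<n}. int (open_count k) * int (open_count (n - k))) - 2 * int (open_count (n - 1))"
    using assms by (simp add: sum_subtractf sum_distrib_left)
  also have "(\<Sum>k\<in>{1..<n}. int (open_count k) * int (open_count (n - k)))
      = (\<Sum>i=0..n. int (open_count i) * int (open_count (n - i)))"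
    by (rule sum.mono_neutral_left) (auto simp: open_count_0 Suc_le_eq)
  finally show ?thesis .
qed

lemma open_count_fps_equation:
  "open_count_fps = fps_X + 6 * open_count_fps ^ 2 - 2 * (fps_X * open_count_fps)"
proof (rule fps_ext)
  fix n :: nat
  consider "n = 0" | "n = 1" | "2 \<le> n" by linarith
  then show "open_count_fps $ n = (fps_X + 6 * open_count_fps ^ 2 - 2 * (fps_X * open_count_fps)) $ n"
  proof cases
    case 3
    then have "(fps_X + 6 * open_count_fps ^ 2 - 2 * (fps_X * open_count_fps)) $ n
        = 6 * (open_count_fps * open_count_fps) $ n - 2 * open_count_fps $ (n - 1)"
      by (simp add: numeral_fps_const power2_eq_square)
    then show ?thesis
      using open_count_convolution[OF 3] by (simp add: open_count_fps_def fps_mult_nth)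
  qed (simp_all add: open_count_fps_def open_count_0 open_count_1 numeral_fps_const fps_X_def
      power2_eq_square fps_mult_nth)
qed

theorem proposition2p9:
  shows "- fps_X - fps_X ^ 2 + (1 - 4 * fps_X) * H - 3 * H ^ 2 = (0 :: int fps)"
proof -
  let ?F = open_count_fps
  have "- fps_X - fps_X ^ 2 + (1 - 4 * fps_X) * H - 3 * H ^ 2
      = 2 * (?F - (fps_X + 6 * ?F ^ 2 - 2 * (fps_X * ?F)))"
    unfolding H_eq_open_count_fps by algebra
  also have "\<dots> = 0"
    using open_count_fps_equation by simp
  finally show ?thesis .
qed

end
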